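(* For all real $\alpha,\beta$ with $\beta\neq0$, every integer $n\ge0$ and every real $x$, \[ x^n=\sum_{k=0}^{n}\widetilde S_{\alpha,\beta}(n,k)\,P_k^{(\alpha,\beta)}(x),\qquad\text{where }\ \widetilde S_{\alpha,\beta}(n,k)=(-1)^{n-k}S_{-\alpha/\beta,\,1/\beta}(n,k). \]
   Context: For real $a$ and integer $n\ge 1$, $\langle a\rangle_n:=a(a+1)\cdots(a+n-1)$ and $\langle a\rangle_0:=1$. For real $\alpha,\beta$ with $\beta\neq0$, the polynomials $P_n^{(\alpha,\beta)}(x)$, $n\ge0$, are defined by $\sum_{n\ge0}P_n^{(\alpha,\beta)}(x)\frac{t^n}{n!}=(1-t)^{\alpha}\exp\big(x((1-t)^{\beta}-1)\big)$ (formal power series in $t$). For real $\alpha,\beta$ and integers $0\le k\le n$, $S_{\alpha,\beta}(n,k):=\frac{1}{k!}\sum_{j=0}^{k}(-1)^{k-j}\binom{k}{j}\langle-\alpha-\beta j\rangle_n$. *)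

theory Defs
  imports Complex_Main "HOL-Computational_Algebra.Formal_Power_Series"
begin

definition one_minus_t_pow :: "real \<Rightarrow> real fps" where
  "one_minus_t_pow a = fps_binomial a oo (- fps_X)"

definition P_gf :: "real \<Rightarrow> real \<Rightarrow> real \<Rightarrow> real fps" where
  "P_gf \<alpha> \<beta> x = one_minus_t_pow \<alpha> *
      (fps_exp 1 oo (fps_const x * (one_minus_t_pow \<beta> - 1)))"

definition P :: "real \<Rightarrow> real \<Rightarrow> nat \<Rightarrow> real \<Rightarrow> real" where
  "P \<alpha> \<beta> n x = fact n * fps_nth (P_gf \<alpha> \<beta> x) n"

definition S :: "real \<Rightarrow> real \<Rightarrow> nat \<Rightarrow> nat \<Rightarrow> real" where
  "S \<alpha> \<beta> n k = (1 / fact k) *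
     (\<Sum>j=0..k. (-1) ^ (k - j) * real (k choose j) * pochhammer (- \<alpha> - \<beta> * real j) n)"

end

(*
  Substitute t = 1 - (1 + u)^(1/beta), the compositional inverse of u = (1 - t)^beta - 1.
  The generating function of the P_k then becomes (1 + u)^(alpha/beta) e^(xu), so
  e^(xu) = (1 + u)^(-alpha/beta) * sum_k P_k(x)/k! * (1 - (1 + u)^(1/beta))^k.
  Comparing coefficients of u^n, after expanding the k-th power by the binomial theorem,
  expresses x^n in the P_k(x); n! times these coefficients are the signed S-numbers.
*)
theory Submission
  imports Defs
begin

unbundle fps_syntax

lemma fps_binomial_compose:
  fixes a b :: "'a::field_char_0"
  shows "fps_binomial a oo (fps_binomial b - 1) = fps_binomial (a * b)"
proof -
  txt \<open>Both sides solve the binomial ODE \<open>(1 + X) f' = a b f\<close>, \<open>f(0) = 1\<close>.\<close>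
  define D where "D = fps_binomial b - 1"
  define f where "f = fps_binomial a oo D"
  have D0: "D $ 0 = 0"
    by (simp add: D_def)
  have "(1 + fps_X) oo D = fps_binomial b"
    by (simp add: D_def D0 fps_compose_add_distrib)
  then have deriv_a: "fps_deriv (fps_binomial a) oo D = fps_const a * f * inverse (fps_binomial b)"
    by (simp add: fps_binomial_deriv fps_divide_unit fps_compose_mult_distrib[OF D0]
        fps_inverse_compose[OF D0] f_def)
  have deriv_D: "fps_deriv D = fps_const b * fps_binomial b * inverse (1 + fps_X)"
    by (simp add: D_def fps_binomial_deriv fps_divide_unit)
  have "fps_deriv f = (fps_deriv (fps_binomial a) oo D) * fps_deriv D"
    unfolding f_def by (rule fps_compose_deriv[OF D0])
  also have "\<dots> = fps_const (a * b) * f * inverse (1 + fps_X) * (inverse (fps_binomial b) * fps_binomial b)"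
    unfolding deriv_a deriv_D by (simp add: ac_simps)
  also have "\<dots> = fps_const (a * b) * f / (1 + fps_X)"
    by (simp add: inverse_mult_eq_1 fps_divide_unit)
  finally show ?thesis
    using fps_binomial_ODE_unique'[of f "a * b"] by (simp add: f_def D_def)
qed

lemma fps_mult_compose_nth:
  fixes D G C :: "'a::comm_semiring_1 fps"
  assumes C0: "C $ 0 = 0"
  shows "(D * (G oo C)) $ n = (\<Sum>k=0..n. G $ k * (D * C ^ k) $ n)"
proof -
  have "(D * (G oo C)) $ n = (\<Sum>i=0..n. D $ i * (\<Sum>k=0..n. G $ k * (C ^ k) $ (n - i)))"
    unfolding fps_mult_nth fps_compose_nth
  proof (intro sum.cong refl)
    fix i assume "i \<in> {0..n}"
    have "(\<Sum>k=0..n-i. G $ k * (C ^ k) $ (n - i)) = (\<Sum>k=0..n. G $ k * (C ^ k) $ (n - i))"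
      by (rule sum.mono_neutral_left) (auto simp: startsby_zero_power_prefix[OF C0])
    then show "D $ i * (\<Sum>k=0..n-i. G $ k * (C ^ k) $ (n - i)) = D $ i * (\<Sum>k=0..n. G $ k * (C ^ k) $ (n - i))"
      by simp
  qed
  also have "\<dots> = (\<Sum>k=0..n. G $ k * (\<Sum>i=0..n. D $ i * (C ^ k) $ (n - i)))"
    unfolding sum_distrib_left by (subst sum.swap) (simp only: mult_ac)
  finally show ?thesis
    by (simp add: fps_mult_nth)
qed

lemma one_minus_t_pow_compose:
  "one_minus_t_pow a oo (1 - fps_binomial b) = fps_binomial (a * b)"
proof -
  have "one_minus_t_pow a oo (1 - fps_binomial b) = fps_binomial a oo (- fps_X oo (1 - fps_binomial b))"
    unfolding one_minus_t_pow_def by (rule fps_compose_assoc[symmetric]) simp_all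
  also have "- fps_X oo (1 - fps_binomial b) = fps_binomial b - 1"
    by (simp add: fps_compose_uminus)
  finally show ?thesis
    by (simp add: fps_binomial_compose)
qed

lemma P_gf_compose:
  assumes "\<beta> \<noteq> 0"
  shows "P_gf \<alpha> \<beta> x oo (1 - fps_binomial (1 / \<beta>)) = fps_binomial (\<alpha> / \<beta>) * fps_exp x"
proof -
  define C where "C = 1 - fps_binomial (1 / \<beta>)"
  define Q where "Q = fps_const x * (one_minus_t_pow \<beta> - 1)"
  have C0: "C $ 0 = 0" and Q0: "Q $ 0 = 0"
    by (simp_all add: C_def Q_def one_minus_t_pow_def)
  have "Q oo C = fps_const x * ((one_minus_t_pow \<beta> oo C) - 1)"
    by (simp add: Q_def fps_compose_sub_distrib flip: fps_const_mult_apply_left)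
  also have "one_minus_t_pow \<beta> oo C = 1 + fps_X"
    using assms by (simp add: C_def one_minus_t_pow_compose fps_binomial_1)
  finally have "Q oo C = fps_const x * fps_X"
    by simp
  have "P_gf \<alpha> \<beta> x oo C = (one_minus_t_pow \<alpha> oo C) * (fps_exp 1 oo (Q oo C))"
    unfolding P_gf_def Q_def[symmetric] fps_compose_mult_distrib[OF C0] fps_compose_assoc[OF C0 Q0] ..
  also have "\<dots> = fps_binomial (\<alpha> / \<beta>) * fps_exp x"
    using \<open>Q oo C = fps_const x * fps_X\<close> by (simp add: C_def one_minus_t_pow_compose)
  finally show ?thesis
    unfolding C_def .
qed

lemma one_minus_fps_binomial_power:
  fixes b :: "'a::field_char_0"
  shows "(1 - fps_binomial b) ^ k
    = (\<Sum>j=0..k. fps_const ((-1) ^ j * of_nat (k choose j)) * fps_binomial (of_nat j * b))"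
proof -
  have "(1 - fps_binomial b) ^ k = (- fps_binomial b + 1) ^ k"
    by simp
  also have "\<dots> = (\<Sum>j\<le>k. of_nat (k choose j) * (- fps_binomial b) ^ j)"
    using binomial_ring[of "- fps_binomial b" 1 k] by simp
  also have "\<dots> = (\<Sum>j=0..k. fps_const ((-1) ^ j * of_nat (k choose j)) * fps_binomial (of_nat j * b))"
  proof (intro sum.cong)
    fix j
    have "(-1 :: 'a fps) ^ j = fps_const ((-1) ^ j)"
      by (induction j) (simp_all add: fps_const_neg)
    then have "(- fps_binomial b) ^ j = fps_const ((-1) ^ j) * fps_binomial (of_nat j * b)"
      by (simp only: power_minus[of "fps_binomial b"] fps_binomial_power)
    then show "of_nat (k choose j) * (- fps_binomial b) ^ j
      = fps_const ((-1) ^ j * of_nat (k choose j)) * fps_binomial (of_nat j * b)"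
      by (simp only: fps_of_nat mult_ac flip: fps_const_mult)
  qed auto
  finally show ?thesis .
qed

lemma fps_binomial_mult_power_nth:
  fixes b c :: "'a::field_char_0"
  shows "(fps_binomial c * (1 - fps_binomial b) ^ k) $ n
    = (\<Sum>j=0..k. (-1) ^ j * of_nat (k choose j) * ((c + of_nat j * b) gchoose n))"
proof -
  have "fps_binomial c * (1 - fps_binomial b) ^ k
    = (\<Sum>j=0..k. fps_const ((-1) ^ j * of_nat (k choose j)) * fps_binomial (c + of_nat j * b))"
    by (simp add: one_minus_fps_binomial_power sum_distrib_left fps_binomial_add_mult mult_ac)
  then show ?thesis
    by (simp only: fps_sum_nth fps_mult_left_const_nth fps_binomial_nth)
qed

lemma fact_mult_fps_binomial_mult_power_nth_eq_S:
  "fact n * (fps_binomial c * (1 - fps_binomial b) ^ k) $ n = (-1) ^ (n + k) * fact k * S c b n k"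
proof -
  have summand: "fact n * ((-1) ^ j * real (k choose j) * ((c + real j * b) gchoose n))
      = (-1) ^ (n + k) * ((-1) ^ (k - j) * real (k choose j) * pochhammer (- c - b * real j) n)"
    if "j \<le> k" for j
  proof -
    have sign: "(-1::real) ^ (n + k) * (-1) ^ (k - j) = (-1) ^ n * (-1) ^ j"
      using that by (simp add: minus_one_power_iff flip: power_add)
    have gchoose: "fact n * ((c + real j * b) gchoose n) = (-1) ^ n * pochhammer (- c - b * real j) n"
      by (simp add: gbinomial_pochhammer algebra_simps)
    have "fact n * ((-1) ^ j * real (k choose j) * ((c + real j * b) gchoose n))
        = (-1) ^ j * real (k choose j) * (fact n * ((c + real j * b) gchoose n))"
      by (simp only: mult_ac)
    also have "\<dots> = ((-1) ^ n * (-1) ^ j) * real (k choose j) * pochhammer (- c - b * real j) n"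
      unfolding gchoose by (simp only: mult_ac)
    finally show ?thesis
      unfolding sign[symmetric] by (simp only: mult_ac)
  qed
  have "fact n * (fps_binomial c * (1 - fps_binomial b) ^ k) $ n
      = (\<Sum>j=0..k. fact n * ((-1) ^ j * real (k choose j) * ((c + real j * b) gchoose n)))"
    by (simp only: fps_binomial_mult_power_nth sum_distrib_left)
  also have "\<dots> = (\<Sum>j=0..k. (-1) ^ (n + k) *
      ((-1) ^ (k - j) * real (k choose j) * pochhammer (- c - b * real j) n))"
    by (intro sum.cong refl summand) simp
  also have "\<dots> = (-1) ^ (n + k) * fact k * S c b n k"
    unfolding S_def sum_distrib_left[symmetric] by simp
  finally show ?thesis .
qed

theorem proposition2:
  fixes \<alpha> \<beta> x :: real and n :: nat
  assumes "\<beta> \<noteq> 0"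
  shows "x ^ n = (\<Sum>k=0..n. ((-1) ^ (n - k) * S (- \<alpha> / \<beta>) (1 / \<beta>) n k) * P \<alpha> \<beta> k x)"
proof -
  define C where "C = 1 - fps_binomial (1 / \<beta>)"
  have C0: "C $ 0 = 0"
    by (simp add: C_def)
  have exp_eq: "fps_exp x = fps_binomial (- \<alpha> / \<beta>) * (P_gf \<alpha> \<beta> x oo C)"
    by (simp add: C_def P_gf_compose[OF assms] mult.assoc[symmetric] flip: fps_binomial_add_mult)
  have "x ^ n = fact n * fps_exp x $ n"
    by simp
  also have "\<dots> = (\<Sum>k=0..n. fact n * (P_gf \<alpha> \<beta> x $ k * (fps_binomial (- \<alpha> / \<beta>) * C ^ k) $ n))"
    unfolding exp_eq fps_mult_compose_nth[OF C0] sum_distrib_left ..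
  also have "\<dots> = (\<Sum>k=0..n. ((-1) ^ (n - k) * S (- \<alpha> / \<beta>) (1 / \<beta>) n k) * P \<alpha> \<beta> k x)"
    unfolding mult.left_commute[of "fact n"] C_def fact_mult_fps_binomial_mult_power_nth_eq_S
    by (intro sum.cong refl) (simp add: P_def neg_one_power_add_eq_neg_one_power_diff mult_ac)
  finally show ?thesis .
qed

end
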